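(* Let $k\in\mathbb{N}$, $g\in\mathbb{Z}$ with $-k<g\le k$, $b\in\mathbb{R}$, and $z\in\mathbb{C}$ with $\mathrm{Re}(z)>0$ and $\mathrm{Re}(1/z)\ge k/2$. Define \[ \mathcal{I}_{k,g,b}(z):=e^{\frac{2\pi b}{kz}}z^{\frac52}\int_{-\infty}^{\infty}e^{-\frac{2\pi u^2}{kz}}f_{k,g}(u)\,du,\qquad \mathcal{J}_{k,g,b}(z):=e^{\frac{2\pi b}{kz}}z^{\frac52}\int_{-\sqrt b}^{\sqrt b}e^{-\frac{2\pi u^2}{kz}}f_{k,g}(u)\,du\ \ (b>0), \] and $h_{g,k}:=k^2/g^2$ if $g\ne0$, $h_{g,k}:=1$ if $g=0$. Then: (1) if $b\le0$, then $|\mathcal{I}_{k,g,b}(z)|\ll |z|^{\frac52}h_{g,k}$; (2) if $b>0$, then $\mathcal{I}_{k,g,b}(z)=\mathcal{J}_{k,g,b}(z)+\mathcal{E}_{k,g,b}(z)$ where $|\mathcal{E}_{k,g,b}(z)|\ll|z|^{\frac52}h_{g,k}$; with implied constants independent of $k$, $g$ and $z$.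
   Context: For $k\in\mathbb{N}$, $g\in\mathbb{Z}$, $u\in\mathbb{R}$: $f_{k,g}(u):=\frac{\pi^2}{\sinh^2\left(\frac{\pi u}{k}-\frac{\pi i g}{2k}\right)}$ if $g\not\equiv0\pmod{2k}$, and $f_{k,g}(u):=\frac{\pi^2}{\sinh^2(\pi u/k)}-\frac{k^2}{u^2}$ if $g\equiv0\pmod{2k}$. $z^{5/2}$ denotes the principal branch. *)

theory Defs
  imports "HOL-Analysis.Analysis"
begin

definition f_kg :: "nat \<Rightarrow> int \<Rightarrow> real \<Rightarrow> complex" where
  "f_kg k g u =
     (if \<not> (2 * int k) dvd g
      then complex_of_real (pi^2) /
           (sinh (complex_of_real (pi * u / real k) - \<i> * complex_of_real (pi * real_of_int g / (2 * real k))))^2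
      else complex_of_real (pi^2 / (sinh (pi * u / real k))^2 - (real k)^2 / u^2))"

definition h_gk :: "int \<Rightarrow> nat \<Rightarrow> real" where
  "h_gk g k = (if g \<noteq> 0 then (real k)^2 / (real_of_int g)^2 else 1)"

definition integrand_kg :: "nat \<Rightarrow> int \<Rightarrow> complex \<Rightarrow> real \<Rightarrow> complex" where
  "integrand_kg k g z u = exp (- 2 * complex_of_real pi * complex_of_real (u^2) / (of_nat k * z)) * f_kg k g u"

definition I_kgb :: "nat \<Rightarrow> int \<Rightarrow> real \<Rightarrow> complex \<Rightarrow> complex" where
  "I_kgb k g b z = exp (2 * complex_of_real pi * complex_of_real b / (of_nat k * z)) * z powr (5/2)
      * integral UNIV (integrand_kg k g z)"

definition J_kgb :: "nat \<Rightarrow> int \<Rightarrow> real \<Rightarrow> complex \<Rightarrow> complex" where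
  "J_kgb k g b z = exp (2 * complex_of_real pi * complex_of_real b / (of_nat k * z)) * z powr (5/2)
      * integral {- sqrt b .. sqrt b} (integrand_kg k g z)"

end

theory Submission
  imports Defs "HOL-Probability.Distributions"
begin

text \<open>
  The hypothesis \<open>Re (1/z) \<ge> k/2\<close> makes \<open>|exp (2\<pi>(b - u\<^sup>2)/(kz))| \<le> exp (b/2) exp (-u\<^sup>2/2)\<close>
  wherever \<open>u\<^sup>2 \<ge> b\<close>, i.e.\ everywhere for \<open>b \<le> 0\<close> and off \<open>[-\<surd>b, \<surd>b]\<close> for \<open>b > 0\<close>.
  Moreover \<open>f\<^sub>k\<^sub>,\<^sub>g\<close> is bounded by \<open>36 h\<^sub>g\<^sub>,\<^sub>k\<close> uniformly in \<open>u\<close>: for \<open>g \<noteq> 0\<close> one has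
  \<open>|sinh (x - iy)| \<ge> |sin y| \<ge> |y|/3\<close> with \<open>y = \<pi>g/(2k) \<in> [-\<pi>/2, \<pi>/2]\<close>, and for \<open>g = 0\<close>
  the singularities of \<open>1/sinh\<^sup>2 x\<close> and \<open>1/x\<^sup>2\<close> cancel.  So the integrand over the relevant
  region is dominated by a Gaussian whose integral is independent of \<open>k\<close>, \<open>g\<close> and \<open>z\<close>.
\<close>

lemma has_integral_exp_neg_sq_half:
  "((\<lambda>u::real. exp (- u\<^sup>2 / 2)) has_integral sqrt (2 * pi)) UNIV"
proof -
  have "(std_normal_density has_integral 1) UNIV"
    using has_integral_integral_lborel[OF integrable_normal_density] by simp
  from has_integral_mult_right[OF this, of "sqrt (2 * pi)"] show ?thesis
    by (simp add: std_normal_density_def)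
qed

lemma sin_ge_third:
  fixes t :: real assumes "0 \<le> t" "t \<le> 2" shows "t / 3 \<le> sin t"
proof -
  have "\<bar>sin t - (\<Sum>m<3. sin_coeff m * t ^ m)\<bar> \<le> inverse (fact 3) * \<bar>t\<bar> ^ 3"
    by (rule Maclaurin_sin_bound)
  moreover have "(\<Sum>m<3. sin_coeff m * t ^ m) = t"
    by (simp add: numeral_eq_Suc sin_coeff_def)
  ultimately have "\<bar>sin t - t\<bar> \<le> t ^ 3 / 6"
    using assms by (simp add: fact_numeral)
  then have taylor: "t - t ^ 3 / 6 \<le> sin t"
    using abs_le_D2 by fastforce
  have "t * t\<^sup>2 \<le> t * 4"
    using assms power_mono[of t 2 2] by (intro mult_left_mono) auto
  then show ?thesis
    using taylor by (simp add: power3_eq_cube power2_eq_square)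
qed

lemma sinh_le_cubic:
  fixes a :: real assumes "0 \<le> a" "a \<le> 1" shows "sinh a \<le> a + a ^ 3 / 2"
proof -
  obtain t1 where t1: "\<bar>t1\<bar> \<le> \<bar>a\<bar>"
    "exp a = (\<Sum>m<3. a ^ m / fact m) + exp t1 / fact 3 * a ^ 3"
    using Maclaurin_exp_le by blast
  obtain t2 where t2: "\<bar>t2\<bar> \<le> \<bar>-a\<bar>"
    "exp (-a) = (\<Sum>m<3. (-a) ^ m / fact m) + exp t2 / fact 3 * (-a) ^ 3"
    using Maclaurin_exp_le by blast
  have "exp t1 \<le> exp 1" "exp t2 \<le> exp 1"
    using t1(1) t2(1) assms by auto
  then have "exp t1 \<le> 3" "exp t2 \<le> 3"
    using exp_le by linarith+
  then have "exp t1 * a ^ 3 \<le> 3 * a ^ 3" "exp t2 * a ^ 3 \<le> 3 * a ^ 3"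
    using assms by (auto intro: mult_right_mono)
  moreover have "exp a = 1 + a + a\<^sup>2 / 2 + exp t1 * a ^ 3 / 6"
    "exp (-a) = 1 - a + a\<^sup>2 / 2 - exp t2 * a ^ 3 / 6"
    using t1(2) t2(2) by (simp_all add: lessThan_nat_numeral fact_numeral)
  ultimately show ?thesis
    by (simp add: sinh_def field_simps)
qed

lemma abs_inverse_sinh_sq_diff_le:
  fixes x :: real assumes "x \<noteq> 0" shows "\<bar>1 / (sinh x)\<^sup>2 - 1 / x\<^sup>2\<bar> \<le> 5 / 4"
proof -
  define a where "a = \<bar>x\<bar>"
  have a: "a > 0" using assms by (simp add: a_def)
  have sinh_sq: "(sinh x)\<^sup>2 = (sinh a)\<^sup>2" and x_sq: "x\<^sup>2 = a\<^sup>2"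
    by (simp_all add: a_def)
  have "a \<le> sinh a"
    using real_le_x_sinh[of a] a by (simp add: sinh_def exp_minus)
  then have "a\<^sup>2 \<le> (sinh a)\<^sup>2"
    using a by (intro power_mono) auto
  then have upper: "1 / (sinh a)\<^sup>2 \<le> 1 / a\<^sup>2"
    using a by (intro divide_left_mono) auto
  have lower: "1 / a\<^sup>2 - 1 / (sinh a)\<^sup>2 \<le> 5 / 4"
  proof (cases "a \<le> 1")
    case False
    then have "1 / a\<^sup>2 \<le> 1"
      by (simp add: divide_le_eq_1 one_le_power)
    moreover have "0 \<le> 1 / (sinh a)\<^sup>2" by simp
    ultimately show ?thesis by linarith
  next
    case True
    define q where "q = 1 + a\<^sup>2 / 2"
    have q: "q \<ge> 1" by (simp add: q_def)
    have "sinh a \<le> a * q"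
      using sinh_le_cubic[of a] a True
      by (simp add: q_def algebra_simps power3_eq_cube power2_eq_square)
    then have "(sinh a)\<^sup>2 \<le> (a * q)\<^sup>2"
      using a by (intro power_mono) auto
    then have "1 / (a * q)\<^sup>2 \<le> 1 / (sinh a)\<^sup>2"
      using a q by (intro divide_left_mono mult_pos_pos) auto
    moreover have "1 / a\<^sup>2 - 1 / (a * q)\<^sup>2 = (q\<^sup>2 - 1) / (a\<^sup>2 * q\<^sup>2)"
      using a q by (simp add: field_simps power_mult_distrib)
    moreover have "(q\<^sup>2 - 1) / (a\<^sup>2 * q\<^sup>2) \<le> (q\<^sup>2 - 1) / a\<^sup>2"
      using a q by (intro divide_left_mono mult_pos_pos) (auto simp: one_le_power)
    moreover have "(q\<^sup>2 - 1) / a\<^sup>2 = 1 + a\<^sup>2 / 4"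
      using a by (simp add: q_def power2_eq_square field_simps)
    moreover have "a\<^sup>2 \<le> 1"
      using True a by (simp add: power_le_one)
    ultimately show ?thesis by linarith
  qed
  show ?thesis
    unfolding sinh_sq x_sq abs_le_iff using upper lower by linarith
qed

lemma sin_sq_le_norm_sinh_sq:
  fixes x y :: real
  shows "(sin y)\<^sup>2 \<le> (cmod (sinh (complex_of_real x - \<i> * complex_of_real y)))\<^sup>2"
proof -
  have "cmod (sinh (complex_of_real x - \<i> * complex_of_real y))
      = cmod (sin (\<i> * (complex_of_real x - \<i> * complex_of_real y)))"
    by (simp add: sinh_conv_sin norm_mult)
  moreover have "\<i> * (complex_of_real x - \<i> * complex_of_real y) = Complex y x"
    by (simp add: complex_eq_iff)
  ultimately have "(cmod (sinh (complex_of_real x - \<i> * complex_of_real y)))\<^sup>2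
      = (exp (2 * x) + inverse (exp (2 * x)) - 2 * cos (2 * y)) / 4"
    by (simp add: norm_mult norm_sin_squared)
  moreover have "2 \<le> exp (2 * x) + inverse (exp (2 * x))"
    using exp_plus_inverse_exp by blast
  ultimately show ?thesis
    by (simp add: cos_double_sin)
qed

lemma norm_sinh_ge_abs_div_3:
  fixes x y :: real assumes "\<bar>y\<bar> \<le> 2"
  shows "\<bar>y\<bar> / 3 \<le> cmod (sinh (complex_of_real x - \<i> * complex_of_real y))"
proof -
  have "\<bar>y\<bar> / 3 \<le> sin \<bar>y\<bar>"
    using sin_ge_third[of "\<bar>y\<bar>"] assms by simp
  then have "(\<bar>y\<bar> / 3)\<^sup>2 \<le> (sin y)\<^sup>2"
    using power_mono[of "\<bar>y\<bar> / 3" "sin \<bar>y\<bar>" 2] by (cases "y \<ge> 0") auto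
  also have "\<dots> \<le> (cmod (sinh (complex_of_real x - \<i> * complex_of_real y)))\<^sup>2"
    by (rule sin_sq_le_norm_sinh_sq)
  finally show ?thesis
    by (rule power2_le_imp_le) simp
qed

lemma abs_pi_sq_div_sinh_sq_diff_le:
  fixes c u :: real assumes "c \<noteq> 0"
  shows "\<bar>pi\<^sup>2 / (sinh (pi * u / c))\<^sup>2 - c\<^sup>2 / u\<^sup>2\<bar> \<le> 5 / 4 * pi\<^sup>2"
proof (cases "u = 0")
  case False
  define x where "x = pi * u / c"
  have "x \<noteq> 0" using False assms by (simp add: x_def)
  have "pi\<^sup>2 / (sinh (pi * u / c))\<^sup>2 - c\<^sup>2 / u\<^sup>2 = pi\<^sup>2 * (1 / (sinh x)\<^sup>2 - 1 / x\<^sup>2)"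
    using False assms by (simp add: x_def field_simps power_mult_distrib)
  then show ?thesis
    using abs_inverse_sinh_sq_diff_le[OF \<open>x \<noteq> 0\<close>] by (simp add: abs_mult)
qed simp

lemma norm_f_kg_le:
  assumes k: "k > 0" and g: "- int k < g" "g \<le> int k"
  shows "cmod (f_kg k g u) \<le> 36 * h_gk g k"
proof (cases "(2 * int k) dvd g")
  case True
  have "g = 0"
  proof (rule ccontr)
    assume "g \<noteq> 0"
    with True have "2 * int k \<le> \<bar>g\<bar>"
      by (auto dest: dvd_imp_le_int)
    with g show False by linarith
  qed
  then have h: "h_gk g k = 1" by (simp add: h_gk_def)
  have "pi\<^sup>2 \<le> 16"
    using power_mono[of pi 4 2] pi_less_4 pi_gt_zero by simp
  moreover have "f_kg k g u
      = complex_of_real (pi\<^sup>2 / (sinh (pi * u / real k))\<^sup>2 - (real k)\<^sup>2 / u\<^sup>2)"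
    unfolding f_kg_def using True by (subst if_not_P) auto
  ultimately show ?thesis
    using abs_pi_sq_div_sinh_sq_diff_le[of "real k" u] k by (simp only: h norm_of_real) simp
next
  case False
  then have "g \<noteq> 0" by auto
  define y where "y = pi * real_of_int g / (2 * real k)"
  have abs_y: "\<bar>y\<bar> = pi * \<bar>real_of_int g\<bar> / (2 * real k)"
    using k by (simp add: y_def abs_mult)
  have "\<bar>real_of_int g\<bar> \<le> real k" using g by linarith
  then have "\<bar>y\<bar> \<le> pi / 2"
    unfolding abs_y using k by (simp add: field_simps)
  then have denominator: "\<bar>y\<bar> / 3 \<le> cmod (sinh (complex_of_real (pi * u / real k) - \<i> * complex_of_real y))"
    using pi_less_4 by (intro norm_sinh_ge_abs_div_3) simp
  have "0 < \<bar>y\<bar> / 3"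
    using \<open>g \<noteq> 0\<close> k by (simp add: y_def)
  have "cmod (f_kg k g u)
      = pi\<^sup>2 / (cmod (sinh (complex_of_real (pi * u / real k) - \<i> * complex_of_real y)))\<^sup>2"
    using False by (simp add: f_kg_def y_def norm_divide norm_power)
  also have "\<dots> \<le> pi\<^sup>2 / (\<bar>y\<bar> / 3)\<^sup>2"
    using denominator \<open>0 < \<bar>y\<bar> / 3\<close> by (intro divide_left_mono mult_pos_pos power_mono) auto
  also have "pi\<^sup>2 / (\<bar>y\<bar> / 3)\<^sup>2 = 36 * h_gk g k"
    using \<open>g \<noteq> 0\<close> k by (simp add: abs_y h_gk_def field_simps power_mult_distrib)
  finally show ?thesis .
qed

lemma borel_measurable_integrand_kg: "integrand_kg k g z \<in> borel_measurable (lebesgue_on UNIV)"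
proof -
  have [measurable]: "(sinh :: complex \<Rightarrow> complex) \<in> borel_measurable borel"
    "(sinh :: real \<Rightarrow> real) \<in> borel_measurable borel"
    by (intro borel_measurable_continuous_onI continuous_intros)+
  have "f_kg k g \<in> borel_measurable borel"
    unfolding f_kg_def by (cases "2 * int k dvd g") simp_all
  then have "integrand_kg k g z \<in> borel_measurable borel"
    unfolding integrand_kg_def by measurable
  then show ?thesis
    unfolding lebesgue_on_UNIV_eq by (intro measurable_completion) simp
qed

lemma norm_exp_div_le:
  assumes k: "k > 0" and z: "Re (1 / z) \<ge> real k / 2" and c: "c \<le> 0"
  shows "cmod (exp (2 * complex_of_real pi * complex_of_real c / (of_nat k * z))) \<le> exp (c / 2)"
proof -
  have Re_scale: "Re (complex_of_real r * w) = r * Re w" for r w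
    by simp
  have "2 * complex_of_real pi * complex_of_real c / (of_nat k * z)
      = complex_of_real (c * (2 * pi / real k)) * (1 / z)"
    by (simp add: field_simps)
  then have Re_eq: "Re (2 * complex_of_real pi * complex_of_real c / (of_nat k * z))
      = c * (2 * pi * Re (1 / z) / real k)"
    by (simp only: Re_scale) simp
  have "pi * real k \<le> 2 * pi * Re (1 / z)" using z by simp
  then have "pi \<le> 2 * pi * Re (1 / z) / real k"
    using k by (simp add: field_simps)
  then have "1 / 2 \<le> 2 * pi * Re (1 / z) / real k"
    using pi_gt3 by linarith
  from mult_left_mono_neg[OF this c]
  have "c * (2 * pi * Re (1 / z) / real k) \<le> c / 2"
    by simp
  then show ?thesis
    by (simp only: norm_exp_eq_Re Re_eq exp_le_cancel_iff)
qed

lemma norm_integrand_kg_le_gaussian: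
  assumes k: "k > 0" and g: "- int k < g" "g \<le> int k" and z: "Re (1 / z) \<ge> real k / 2"
    and b: "b \<le> u\<^sup>2"
  shows "cmod (exp (2 * complex_of_real pi * complex_of_real b / (of_nat k * z)) * integrand_kg k g z u)
     \<le> 36 * h_gk g k * exp (b / 2) * exp (- u\<^sup>2 / 2)"
proof -
  have "exp (2 * complex_of_real pi * complex_of_real b / (of_nat k * z)) * integrand_kg k g z u
      = exp (2 * complex_of_real pi * complex_of_real (b - u\<^sup>2) / (of_nat k * z)) * f_kg k g u"
    by (simp add: integrand_kg_def mult_exp_exp diff_divide_distrib algebra_simps)
  then have "cmod (exp (2 * complex_of_real pi * complex_of_real b / (of_nat k * z)) * integrand_kg k g z u)
      = cmod (exp (2 * complex_of_real pi * complex_of_real (b - u\<^sup>2) / (of_nat k * z))) * cmod (f_kg k g u)"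
    by (simp only: norm_mult)
  also have "\<dots> \<le> exp ((b - u\<^sup>2) / 2) * (36 * h_gk g k)"
    using b by (intro mult_mono norm_exp_div_le[OF k z] norm_f_kg_le[OF k g]) auto
  also have "exp ((b - u\<^sup>2) / 2) = exp (b / 2) * exp (- u\<^sup>2 / 2)"
    by (simp add: diff_divide_distrib flip: exp_add)
  finally show ?thesis
    by (simp only: mult_ac)
qed

lemma integrable_integrand_kg:
  assumes k: "k > 0" and g: "- int k < g" "g \<le> int k" and z: "Re (1 / z) \<ge> real k / 2"
  shows "integrand_kg k g z integrable_on UNIV"
proof (rule measurable_bounded_by_integrable_imp_integrable)
  show "integrand_kg k g z \<in> borel_measurable (lebesgue_on UNIV)"
    by (rule borel_measurable_integrand_kg)
  show "(\<lambda>u. 36 * h_gk g k * exp (- u\<^sup>2 / 2)) integrable_on UNIV"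
    by (intro integrable_on_mult_right has_integral_integrable[OF has_integral_exp_neg_sq_half])
  show "norm (integrand_kg k g z u) \<le> 36 * h_gk g k * exp (- u\<^sup>2 / 2)" for u
    using norm_integrand_kg_le_gaussian[OF k g z, of 0 u] by simp
qed simp

text \<open>
  Both parts of the theorem are instances of this estimate: \<open>S = {}\<close> for \<open>b \<le> 0\<close>, and
  \<open>S = [-\<surd>b, \<surd>b]\<close> for \<open>b > 0\<close>.
\<close>

lemma norm_integral_integrand_kg_outside_le:
  assumes k: "k > 0" and g: "- int k < g" "g \<le> int k" and z: "Re (1 / z) \<ge> real k / 2"
    and S: "integrand_kg k g z integrable_on S" and outside: "\<And>u. u \<notin> S \<Longrightarrow> b \<le> u\<^sup>2"
  shows "cmod (exp (2 * complex_of_real pi * complex_of_real b / (of_nat k * z)) * z powr (5/2)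
      * (integral UNIV (integrand_kg k g z) - integral S (integrand_kg k g z)))
    \<le> 36 * sqrt (2 * pi) * exp (b / 2) * cmod z powr (5/2) * h_gk g k"
proof -
  define E where "E = exp (2 * complex_of_real pi * complex_of_real b / (of_nat k * z))"
  define F where "F = integrand_kg k g z"
  define T where "T = (\<lambda>u. if u \<in> S then 0 else E * F u)"
  have F: "F integrable_on UNIV"
    unfolding F_def by (rule integrable_integrand_kg[OF k g z])
  have FS: "(\<lambda>u. if u \<in> S then F u else 0) integrable_on UNIV"
    using S by (simp add: F_def integrable_restrict_UNIV)
  have T_eq: "T = (\<lambda>u. E * F u - E * (if u \<in> S then F u else 0))"
    by (auto simp: T_def)
  have "E * (integral UNIV F - integral S F) = integral UNIV T"
    unfolding T_eq using F FS
    by (simp add: integral_diff integrable_on_mult_right integral_mult_right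
        integral_restrict_UNIV right_diff_distrib)
  also have "cmod \<dots> \<le> integral UNIV (\<lambda>u. 36 * h_gk g k * exp (b / 2) * exp (- u\<^sup>2 / 2))"
  proof (rule integral_norm_bound_integral)
    show "T integrable_on UNIV"
      unfolding T_eq using F FS by (intro integrable_diff integrable_on_mult_right)
    show "(\<lambda>u. 36 * h_gk g k * exp (b / 2) * exp (- u\<^sup>2 / 2)) integrable_on UNIV"
      by (intro integrable_on_mult_right has_integral_integrable[OF has_integral_exp_neg_sq_half])
    show "norm (T u) \<le> 36 * h_gk g k * exp (b / 2) * exp (- u\<^sup>2 / 2)" if "u \<in> UNIV" for u
      using norm_integrand_kg_le_gaussian[OF k g z outside, of u]
      by (auto simp: T_def E_def F_def h_gk_def)
  qed
  also have "\<dots> = 36 * sqrt (2 * pi) * exp (b / 2) * h_gk g k"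
    using integral_unique[OF has_integral_mult_right[OF has_integral_exp_neg_sq_half]] by simp
  finally have "cmod (E * (integral UNIV F - integral S F)) \<le> 36 * sqrt (2 * pi) * exp (b / 2) * h_gk g k" .
  then have "cmod (E * (integral UNIV F - integral S F)) * cmod z powr (5/2)
      \<le> 36 * sqrt (2 * pi) * exp (b / 2) * h_gk g k * cmod z powr (5/2)"
    by (rule mult_right_mono) simp
  then show ?thesis
    by (simp add: E_def F_def norm_mult norm_powr_real_powr' mult_ac)
qed

theorem lemma3p2:
  fixes b :: real
  shows "\<exists>C>0. \<forall>(k::nat) (g::int) (z::complex).
     k > 0 \<and> - int k < g \<and> g \<le> int k \<and> Re z > 0 \<and> Re (1 / z) \<ge> real k / 2 \<longrightarrow>
       integrand_kg k g z integrable_on UNIV \<and>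
       (b \<le> 0 \<longrightarrow> cmod (I_kgb k g b z) \<le> C * cmod z powr (5/2) * h_gk g k) \<and>
       (b > 0 \<longrightarrow> cmod (I_kgb k g b z - J_kgb k g b z) \<le> C * cmod z powr (5/2) * h_gk g k)"
proof (intro exI[of _ "36 * sqrt (2 * pi) * exp (\<bar>b\<bar> / 2)"] conjI allI impI)
  fix k :: nat and g :: int and z :: complex
  assume "k > 0 \<and> - int k < g \<and> g \<le> int k \<and> Re z > 0 \<and> Re (1 / z) \<ge> real k / 2"
  then have k: "k > 0" and g: "- int k < g" "g \<le> int k" and z: "Re (1 / z) \<ge> real k / 2"
    by auto
  have C: "36 * sqrt (2 * pi) * exp (b / 2) * cmod z powr (5/2) * h_gk g k
      \<le> 36 * sqrt (2 * pi) * exp (\<bar>b\<bar> / 2) * cmod z powr (5/2) * h_gk g k"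
    by (intro mult_right_mono mult_left_mono) (auto simp: h_gk_def)
  show "integrand_kg k g z integrable_on UNIV"
    by (rule integrable_integrand_kg[OF k g z])
  show "cmod (I_kgb k g b z) \<le> 36 * sqrt (2 * pi) * exp (\<bar>b\<bar> / 2) * cmod z powr (5/2) * h_gk g k"
    if "b \<le> 0"
  proof -
    have "b \<le> u\<^sup>2" for u
      using that by (meson order_trans zero_le_power2)
    then have "cmod (I_kgb k g b z) \<le> 36 * sqrt (2 * pi) * exp (b / 2) * cmod z powr (5/2) * h_gk g k"
      using norm_integral_integrand_kg_outside_le[OF k g z integrable_on_empty, of b]
      by (simp add: I_kgb_def)
    from this C show ?thesis
      by (rule order_trans)
  qed
  show "cmod (I_kgb k g b z - J_kgb k g b z)
      \<le> 36 * sqrt (2 * pi) * exp (\<bar>b\<bar> / 2) * cmod z powr (5/2) * h_gk g k"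
    if "b > 0"
  proof -
    have "b \<le> u\<^sup>2" if "u \<notin> {- sqrt b .. sqrt b}" for u
      using that \<open>b > 0\<close> real_sqrt_le_iff[of b "u\<^sup>2"] by (auto simp: abs_le_iff)
    with integrable_on_subinterval[OF integrable_integrand_kg[OF k g z]]
    have "cmod (I_kgb k g b z - J_kgb k g b z)
        \<le> 36 * sqrt (2 * pi) * exp (b / 2) * cmod z powr (5/2) * h_gk g k"
      using norm_integral_integrand_kg_outside_le[OF k g z, of "{- sqrt b .. sqrt b}" b]
      by (simp add: I_kgb_def J_kgb_def right_diff_distrib)
    from this C show ?thesis
      by (rule order_trans)
  qed
qed simp

end
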